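(* Let $(\mathcal Q,d)$ be a Hadamard space, $Y$ a $\mathcal Q$-valued random variable, $o\in\mathcal Q$, and $\tau\in\mathcal S_0^+$ with $\tau'(0)=0$ and $\mathbb E[\tau'(d(Y,o))]<\infty$. Let $m\in\arg\min_{q\in\mathcal Q}\mathbb E[\tau(d(Y,q))-\tau(d(Y,o))]$. Then for all $q\in\mathcal Q$, $$\mathbb E[\tau(d(Y,q))-\tau(d(Y,m))]\ \ge\ \tau(d(q,m))\,\mathbb P(Y=m).$$
   Context: A Hadamard space is a complete metric space $(\mathcal Q,d)$ such that for all $y_0,y_1$ there is $m$ with $\frac12 d(y_0,q)^2+\frac12 d(y_1,q)^2-\frac14 d(y_0,y_1)^2\ge d(q,m)^2$ for all $q$. $\mathcal S_0^+$ is the set of nondecreasing convex $\tau:[0,\infty)\to\mathbb R$, differentiable on $(0,\infty)$ with concave derivative $\tau'$, where $\tau'(0):=\lim_{x\searrow0}\tau'(x)$, such that $\tau(0)=0$ and $\tau'(x)>0$ for $x>0$. *)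

theory Defs
  imports "HOL-Probability.Probability"
begin

definition hadamard_space :: "'a::metric_space itself \<Rightarrow> bool" where
  "hadamard_space _ \<longleftrightarrow> Topological_Spaces.complete (UNIV :: 'a set) \<and>
     (\<forall>y0 y1 :: 'a. \<exists>m. \<forall>q.
        (1/2) * (dist y0 q)^2 + (1/2) * (dist y1 q)^2 - (1/4) * (dist y0 y1)^2
          \<ge> (dist q m)^2)"

definition dtau :: "(real \<Rightarrow> real) \<Rightarrow> real \<Rightarrow> real" where
  "dtau \<tau> x = (if x > 0 then deriv \<tau> x else Lim (at_right 0) (deriv \<tau>))"

definition S0plus :: "(real \<Rightarrow> real) set" where
  "S0plus = {\<tau>. mono_on {0..} \<tau> \<and> convex_on {0..} \<tau> \<and>
      (\<forall>x>0. \<tau> differentiable (at x)) \<and>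
      concave_on {0<..} (deriv \<tau>) \<and>
      \<tau> 0 = 0 \<and> (\<forall>x>0. deriv \<tau> x > 0)}"

end

theory Submission imports Defs begin

text \<open>Iterated midpoints give, for every dyadic \<open>s = 2\<^sup>-\<^sup>k\<close>, a point \<open>\<gamma>\<close> with
  \<open>d(y,\<gamma>) \<le> (1-s) d(y,m) + s d(y,q)\<close> for all \<open>y\<close>. As \<open>\<tau>\<close> is nondecreasing and convex,
  \<open>\<tau>(d(Y,\<gamma>)) - \<tau>(d(Y,m)) \<le> s (\<tau>(d(Y,q)) - \<tau>(d(Y,m)))\<close> off the event \<open>Y = m\<close>, while on
  that event the left side is at most \<open>\<tau>(s d(q,m))\<close>. Minimality of \<open>m\<close> makes the expectation
  of the left side nonnegative, hence
  \<open>s \<tau>(d(q,m)) P(Y = m) \<le> s E[\<tau>(d(Y,q)) - \<tau>(d(Y,m))] + \<tau>(s d(q,m)) P(Y = m)\<close>;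
  dividing by \<open>s\<close> and letting \<open>s \<rightarrow> 0\<close> gives the claim, since \<open>\<tau>(x)/x \<rightarrow> \<tau>'(0) = 0\<close>.
  All expectations are finite because \<open>|\<tau>(a) - \<tau>(b)| \<le> |a - b| \<tau>'(b) + C(|a - b|)\<close>.\<close>

locale S0plus_flat =
  fixes \<tau> :: "real \<Rightarrow> real"
  assumes S0plus: "\<tau> \<in> S0plus" and dtau_zero: "dtau \<tau> 0 = 0"
begin

lemma zero [simp]: "\<tau> 0 = 0"
  using S0plus unfolding S0plus_def by auto

lemma mono: "0 \<le> x \<Longrightarrow> x \<le> y \<Longrightarrow> \<tau> x \<le> \<tau> y"
  using S0plus unfolding S0plus_def mono_on_def by auto

lemma nonneg: "0 \<le> x \<Longrightarrow> 0 \<le> \<tau> x"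
  using mono[of 0 x] by simp

lemma convex: "convex_on {0..} \<tau>"
  using S0plus unfolding S0plus_def by auto

lemma deriv_pos: "0 < x \<Longrightarrow> 0 < deriv \<tau> x"
  using S0plus unfolding S0plus_def by auto

lemma above_tangent:
  assumes "0 < x" "0 \<le> y"
  shows "deriv \<tau> x * (y - x) \<le> \<tau> y - \<tau> x"
proof (rule convex_on_imp_above_tangent[OF convex])
  have "\<tau> differentiable (at x)"
    using S0plus assms(1) unfolding S0plus_def by auto
  then show "(\<tau> has_real_derivative deriv \<tau> x) (at x within {0..})"
    by (simp add: DERIV_deriv_iff_real_differentiable has_field_derivative_at_within)
qed (use assms in auto)

lemma le_mult_deriv: "0 < x \<Longrightarrow> \<tau> x \<le> x * deriv \<tau> x"
  using above_tangent[of x 0] by (simp add: algebra_simps)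

lemma deriv_mono:
  assumes "0 < x" "x \<le> y"
  shows "deriv \<tau> x \<le> deriv \<tau> y"
proof (cases "x = y")
  case False
  have "deriv \<tau> x * (y - x) \<le> deriv \<tau> y * (y - x)"
    using above_tangent[of x y] above_tangent[of y x] assms by (auto simp: algebra_simps)
  with False assms show ?thesis by simp
qed simp

text \<open>Concavity of \<open>\<tau>'\<close>, applied at the points \<open>b\<close> and \<open>2c\<close>, which are convex combinations
  of \<open>c\<close> and \<open>b + c\<close> with swapped weights.\<close>
lemma deriv_add_le:
  assumes "0 < b" "0 < c"
  shows "deriv \<tau> (b + c) \<le> deriv \<tau> b + deriv \<tau> (2 * c)"
proof (cases "c \<le> b")
  case True
  have cv: "convex_on {0<..} (\<lambda>x. - deriv \<tau> x)"
    using S0plus unfolding S0plus_def concave_on_def by auto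
  define l where "l = c / b"
  have l: "0 \<le> l" "l \<le> 1" using assms True by (auto simp: l_def)
  have "(1 - l) *\<^sub>R (b + c) + l *\<^sub>R c = b" "(1 - l) *\<^sub>R c + l *\<^sub>R (b + c) = 2 * c"
    using assms by (simp_all add: l_def field_simps)
  then have "- deriv \<tau> b \<le> (1 - l) * - deriv \<tau> (b + c) + l * - deriv \<tau> c"
    and "- deriv \<tau> (2 * c) \<le> (1 - l) * - deriv \<tau> c + l * - deriv \<tau> (b + c)"
    using convex_onD[OF cv l, of "b + c" c] convex_onD[OF cv l, of c "b + c"] assms by auto
  then show ?thesis using deriv_pos[OF assms(2)] by (auto simp: algebra_simps)
next
  case False
  then show ?thesis using deriv_mono[of "b + c" "2 * c"] deriv_pos[OF assms(1)] assms by auto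
qed

lemma abs_diff_le:
  assumes "0 \<le> a" "0 \<le> b" "\<bar>a - b\<bar> \<le> c"
  shows "\<bar>\<tau> a - \<tau> b\<bar> \<le> c * dtau \<tau> b + (c * \<bar>deriv \<tau> (2 * c)\<bar> + \<tau> c)"
proof -
  have K: "0 \<le> c * \<bar>deriv \<tau> (2 * c)\<bar>" "0 \<le> \<tau> c" using assms nonneg by auto
  consider "b = 0" | "0 < b" "b \<le> a" | "0 < b" "a < b" using assms by linarith
  then show ?thesis
  proof cases
    case 1
    then show ?thesis using mono[of a c] nonneg[of a] assms K dtau_zero by (simp; linarith)
  next
    case 2
    have "deriv \<tau> a \<le> deriv \<tau> (b + c)" using deriv_mono assms 2 by auto
    also have "\<dots> \<le> deriv \<tau> b + \<bar>deriv \<tau> (2 * c)\<bar>"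
      using deriv_add_le[of b c] 2 assms by (cases "c = 0") auto
    finally have "deriv \<tau> a * (a - b) \<le> (deriv \<tau> b + \<bar>deriv \<tau> (2 * c)\<bar>) * c"
      using mult_mono deriv_pos[of a] 2 assms by (smt (verit))
    then have "\<tau> a - \<tau> b \<le> c * deriv \<tau> b + c * \<bar>deriv \<tau> (2 * c)\<bar>"
      using above_tangent[of a b] 2 by (simp add: algebra_simps)
    then show ?thesis using mono[of b a] 2 K unfolding dtau_def by (smt (verit))
  next
    case 3
    have "deriv \<tau> b * (b - a) \<le> deriv \<tau> b * c"
      using mult_left_mono deriv_pos[of b] 3 assms by (smt (verit))
    then have "\<tau> b - \<tau> a \<le> c * deriv \<tau> b"
      using above_tangent[of b a] 3 assms by (simp add: algebra_simps)
    then show ?thesis using mono[of a b] 3 assms K unfolding dtau_def by (smt (verit))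
  qed
qed

lemma deriv_small:
  assumes "0 < e"
  shows "\<exists>x>0. deriv \<tau> x < e"
proof -
  define L where "L = Inf (deriv \<tau> ` {0<..})"
  have bdd: "bdd_below (deriv \<tau> ` {0<..})"
    using deriv_pos by (auto intro!: bdd_belowI[of _ 0] less_imp_le)
  have "(deriv \<tau> \<longlongrightarrow> L) (at_right 0)"
  proof (rule order_tendstoI)
    fix a assume "a < L"
    moreover have "\<forall>x>0. L \<le> deriv \<tau> x" unfolding L_def using bdd by (auto intro: cInf_lower)
    ultimately show "eventually (\<lambda>x. a < deriv \<tau> x) (at_right 0)"
      unfolding eventually_at_right_field by (auto intro!: exI[of _ 1])
  next
    fix a assume "L < a"
    then obtain x0 where "x0 > 0" "deriv \<tau> x0 < a"
      unfolding L_def using cInf_lessD[of "deriv \<tau> ` {0<..}" a] by auto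
    then show "eventually (\<lambda>x. deriv \<tau> x < a) (at_right 0)"
      unfolding eventually_at_right_field using deriv_mono
      by (auto intro!: exI[of _ x0]) (meson less_imp_le order_le_less_trans)
  qed
  then have "Lim (at_right 0) (deriv \<tau>) = L" by (rule tendsto_Lim[rotated]) simp
  then have "L = 0" using dtau_zero by (simp add: dtau_def)
  then show ?thesis
    using cInf_lessD[of "deriv \<tau> ` {0<..}" e] assms unfolding L_def by auto
qed

lemma small_le_mult:
  assumes "0 < e"
  obtains \<delta> where "0 < \<delta>" "\<And>x. 0 < x \<Longrightarrow> x \<le> \<delta> \<Longrightarrow> \<tau> x \<le> e * x"
proof -
  obtain \<delta> where \<delta>: "0 < \<delta>" "deriv \<tau> \<delta> < e" using deriv_small[OF assms] by blast
  have "\<tau> x \<le> e * x" if "0 < x" "x \<le> \<delta>" for x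
  proof -
    have "\<tau> x \<le> x * deriv \<tau> x" using le_mult_deriv that(1) .
    also have "\<dots> \<le> x * e" using deriv_mono[OF that] \<delta> that(1) by simp
    finally show ?thesis by (simp add: mult.commute)
  qed
  with \<delta> that show ?thesis by blast
qed

lemma le_of_dyadic_bound:
  assumes P: "0 \<le> P" "P \<le> 1" and "0 \<le> D"
    and bound: "\<And>k. (1/2)^k * \<tau> D * P \<le> (1/2)^k * E + \<tau> ((1/2)^k * D) * P"
  shows "\<tau> D * P \<le> E"
proof (cases "D = 0")
  case True
  then show ?thesis using bound[of 0] by simp
next
  case False
  with \<open>0 \<le> D\<close> have D: "0 < D" by simp
  show ?thesis
  proof (rule field_le_epsilon)
    fix e :: real
    assume "0 < e"
    then have "0 < e / D" using D by simp
    from small_le_mult[OF this] obtain \<delta>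
      where \<delta>: "0 < \<delta>" "\<And>x. 0 < x \<Longrightarrow> x \<le> \<delta> \<Longrightarrow> \<tau> x \<le> e / D * x" by blast
    have "0 < \<delta> / D" using D \<delta> by simp
    from real_arch_pow_inv[OF this, of "1/2"] obtain k where k: "(1/2::real)^k < \<delta> / D" by auto
    define s where "s = (1/2::real)^k"
    have s: "0 < s" "s * D \<le> \<delta>"
      using k D by (simp_all add: s_def pos_less_divide_eq less_imp_le)
    have "\<tau> (s * D) * P \<le> \<tau> (s * D)" using P nonneg[of "s * D"] s(1) D by (simp add: mult_left_le)
    also have "\<dots> \<le> s * e" using \<delta>(2)[of "s * D"] s D by (simp add: mult.commute)
    finally have "s * (\<tau> D * P) \<le> s * (E + e)"
      using bound[of k] unfolding s_def[symmetric] by (simp add: algebra_simps)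
    then show "\<tau> D * P \<le> E + e" using s(1) by simp
  qed
qed

lemma le_interpolate:
  assumes "0 \<le> x" "0 \<le> a" "0 \<le> b" "0 \<le> s" "s \<le> 1" "x \<le> (1 - s) * a + s * b"
  shows "\<tau> x - \<tau> a \<le> s * (\<tau> b - \<tau> a)"
proof -
  have "\<tau> x \<le> \<tau> ((1 - s) * a + s * b)" using mono assms by auto
  also have "\<dots> \<le> (1 - s) * \<tau> a + s * \<tau> b"
    using convex_onD[OF convex, of s a b] assms by auto
  finally show ?thesis by (simp add: algebra_simps)
qed

lemma borel_measurable_dist:
  assumes "Y \<in> M \<rightarrow>\<^sub>M borel"
  shows "(\<lambda>\<omega>. \<tau> (dist (Y \<omega>) q)) \<in> borel_measurable M"
proof -
  have "mono (\<lambda>x. \<tau> (max 0 x))" using mono by (auto simp: mono_def)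
  then have "(\<lambda>x. \<tau> (max 0 x)) \<in> borel_measurable borel" by (rule borel_measurable_mono)
  moreover have "(\<lambda>y. dist y q) \<in> borel_measurable borel"
    by (intro borel_measurable_continuous_onI continuous_intros)
  ultimately have "(\<lambda>\<omega>. \<tau> (max 0 (dist (Y \<omega>) q))) \<in> borel_measurable M"
    using measurable_compose[OF measurable_compose[OF assms]] by blast
  then show ?thesis by simp
qed

lemma integrable_diff_dist:
  assumes "finite_measure M" "Y \<in> M \<rightarrow>\<^sub>M borel"
    and "integrable M (\<lambda>\<omega>. dtau \<tau> (dist (Y \<omega>) x\<^sub>0))"
  shows "integrable M (\<lambda>\<omega>. \<tau> (dist (Y \<omega>) q) - \<tau> (dist (Y \<omega>) p))"
proof -
  interpret finite_measure M by fact
  have to_x0: "integrable M (\<lambda>\<omega>. \<tau> (dist (Y \<omega>) q) - \<tau> (dist (Y \<omega>) x\<^sub>0))" for q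
  proof (rule Bochner_Integration.integrable_bound)
    define c where "c = dist q x\<^sub>0"
    define B where "B \<omega> = c * dtau \<tau> (dist (Y \<omega>) x\<^sub>0) + (c * \<bar>deriv \<tau> (2 * c)\<bar> + \<tau> c)" for \<omega>
    have "\<bar>\<tau> (dist (Y \<omega>) q) - \<tau> (dist (Y \<omega>) x\<^sub>0)\<bar> \<le> B \<omega>" for \<omega>
    proof -
      have "\<bar>dist (Y \<omega>) q - dist (Y \<omega>) x\<^sub>0\<bar> \<le> c"
        unfolding c_def by (smt (verit) dist_commute dist_triangle)
      then show ?thesis unfolding B_def by (intro abs_diff_le zero_le_dist)
    qed
    then show "AE \<omega> in M. norm (\<tau> (dist (Y \<omega>) q) - \<tau> (dist (Y \<omega>) x\<^sub>0)) \<le> norm (B \<omega>)"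
      by (auto intro: order_trans[OF _ abs_ge_self])
    show "integrable M B" unfolding B_def[abs_def] using assms(3) by auto
  qed (use borel_measurable_dist[OF assms(2)] in auto)
  show ?thesis using Bochner_Integration.integrable_diff[OF to_x0[of q] to_x0[of p]] by simp
qed

lemma minimizer_interpolation_bound:
  assumes "prob_space M" "Y \<in> M \<rightarrow>\<^sub>M borel"
    and "integrable M (\<lambda>\<omega>. dtau \<tau> (dist (Y \<omega>) x\<^sub>0))"
    and min: "(\<integral>\<omega>. \<tau> (dist (Y \<omega>) m) - \<tau> (dist (Y \<omega>) x\<^sub>0) \<partial>M)
              \<le> (\<integral>\<omega>. \<tau> (dist (Y \<omega>) \<gamma>) - \<tau> (dist (Y \<omega>) x\<^sub>0) \<partial>M)"
    and \<gamma>: "\<And>y. dist y \<gamma> \<le> (1 - s) * dist y m + s * dist y q"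
    and s: "0 \<le> s" "s \<le> 1"
  shows "s * \<tau> (dist q m) * measure M {\<omega> \<in> space M. Y \<omega> = m}
    \<le> s * (\<integral>\<omega>. \<tau> (dist (Y \<omega>) q) - \<tau> (dist (Y \<omega>) m) \<partial>M)
      + \<tau> (s * dist q m) * measure M {\<omega> \<in> space M. Y \<omega> = m}"
proof -
  interpret prob_space M by fact
  define A where "A = {\<omega> \<in> space M. Y \<omega> = m}"
  define f where "f p \<omega> = \<tau> (dist (Y \<omega>) p)" for p \<omega>
  define excess where "excess = \<tau> (s * dist q m) - s * \<tau> (dist q m)"
  have int: "integrable M (\<lambda>\<omega>. f p \<omega> - f p' \<omega>)" for p p'
    unfolding f_def using integrable_diff_dist assms(2,3) finite_measure_axioms by blast
  have "A = Y -` {m} \<inter> space M" unfolding A_def by auto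
  then have A: "A \<in> sets M" using measurable_sets[OF assms(2)] by (simp add: borel_closed)
  then have int_A: "integrable M (indicator A :: _ \<Rightarrow> real)"
    and integral_A: "(\<integral>\<omega>. indicator A \<omega> \<partial>M) = measure M A"
    by (auto simp: Int_absorb2 sets.sets_into_space less_top[symmetric])
  have pointwise: "f \<gamma> \<omega> - f m \<omega> \<le> s * (f q \<omega> - f m \<omega>) + excess * indicator A \<omega>"
    if "\<omega> \<in> space M" for \<omega>
  proof (cases "Y \<omega> = m")
    case True
    have "\<tau> (dist m \<gamma>) \<le> \<tau> (s * dist q m)" using \<gamma>[of m] by (intro mono) (auto simp: dist_commute)
    then show ?thesis using True that unfolding f_def A_def excess_def by (simp add: dist_commute)
  next
    case False
    then show ?thesis using le_interpolate \<gamma> s unfolding f_def A_def by simp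
  qed
  have "0 \<le> (\<integral>\<omega>. f \<gamma> \<omega> - f x\<^sub>0 \<omega> \<partial>M) - (\<integral>\<omega>. f m \<omega> - f x\<^sub>0 \<omega> \<partial>M)"
    using min unfolding f_def by simp
  also have "\<dots> = (\<integral>\<omega>. f \<gamma> \<omega> - f m \<omega> \<partial>M)"
    using Bochner_Integration.integral_diff[OF int int, of \<gamma> x\<^sub>0 m x\<^sub>0] by simp
  also have "\<dots> \<le> (\<integral>\<omega>. s * (f q \<omega> - f m \<omega>) + excess * indicator A \<omega> \<partial>M)"
    using int int_A pointwise by (intro integral_mono) auto
  also have "\<dots> = s * (\<integral>\<omega>. f q \<omega> - f m \<omega> \<partial>M) + excess * measure M A"
    using int int_A integral_A by simp
  finally show ?thesis unfolding excess_def A_def f_def by (simp add: algebra_simps)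
qed

end

lemma hadamard_space_midpoint:
  fixes y0 y1 :: "'a::metric_space"
  assumes "hadamard_space TYPE('a)"
  obtains m where "\<And>y. dist y m \<le> (dist y0 y + dist y1 y) / 2"
proof -
  obtain m where m: "\<forall>q. (1/2) * (dist y0 q)^2 + (1/2) * (dist y1 q)^2 - (1/4) * (dist y0 y1)^2
      \<ge> (dist q m)^2"
    using assms unfolding hadamard_space_def by blast
  have "dist y m \<le> (dist y0 y + dist y1 y) / 2" for y
  proof (rule power2_le_imp_le)
    have "\<bar>dist y0 y - dist y1 y\<bar> \<le> dist y0 y1"
      by (smt (verit) dist_commute dist_triangle)
    then have "(dist y0 y - dist y1 y)\<^sup>2 \<le> (dist y0 y1)\<^sup>2"
      by (metis abs_le_square_iff abs_of_nonneg zero_le_dist)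
    with m[rule_format, of y] show "(dist y m)\<^sup>2 \<le> ((dist y0 y + dist y1 y) / 2)\<^sup>2"
      by (simp add: power2_eq_square algebra_simps)
  qed simp
  with that show ?thesis by blast
qed

lemma hadamard_space_dyadic_point:
  fixes m q :: "'a::metric_space"
  assumes "hadamard_space TYPE('a)"
  shows "\<exists>\<gamma>. \<forall>y. dist y \<gamma> \<le> (1 - (1/2)^k) * dist y m + (1/2)^k * dist y q"
proof (induction k)
  case 0
  show ?case by (auto intro: exI[of _ q])
next
  case (Suc k)
  then obtain \<gamma> where \<gamma>: "\<And>y. dist y \<gamma> \<le> (1 - (1/2)^k) * dist y m + (1/2)^k * dist y q"
    by blast
  obtain \<gamma>' where \<gamma>': "\<And>y. dist y \<gamma>' \<le> (dist m y + dist \<gamma> y) / 2"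
    using hadamard_space_midpoint[OF assms] by blast
  have "dist y \<gamma>' \<le> (1 - (1/2)^Suc k) * dist y m + (1/2)^Suc k * dist y q" for y
  proof -
    have "dist y \<gamma>' \<le> (dist y m + dist y \<gamma>) / 2" using \<gamma>'[of y] by (simp add: dist_commute)
    also have "\<dots> \<le> (dist y m + ((1 - (1/2)^k) * dist y m + (1/2)^k * dist y q)) / 2"
      using \<gamma>[of y] by simp
    also have "\<dots> = (1 - (1/2)^Suc k) * dist y m + (1/2)^Suc k * dist y q"
      by (simp add: field_simps)
    finally show ?thesis .
  qed
  then show ?case by blast
qed

theorem mainTheorem9:
  fixes M :: "'w measure" and Y :: "'w \<Rightarrow> 'a::metric_space"
    and x\<^sub>0 :: 'a and \<tau> :: "real \<Rightarrow> real" and m :: 'a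
  assumes "hadamard_space TYPE('a)"
    and "prob_space M"
    and "Y \<in> M \<rightarrow>\<^sub>M borel"
    and "\<tau> \<in> S0plus"
    and "dtau \<tau> 0 = 0"
    and "integrable M (\<lambda>\<omega>. dtau \<tau> (dist (Y \<omega>) x\<^sub>0))"
    and "\<forall>q. (\<integral>\<omega>. \<tau> (dist (Y \<omega>) m) - \<tau> (dist (Y \<omega>) x\<^sub>0) \<partial>M)
              \<le> (\<integral>\<omega>. \<tau> (dist (Y \<omega>) q) - \<tau> (dist (Y \<omega>) x\<^sub>0) \<partial>M)"
  shows "\<forall>q. (\<integral>\<omega>. \<tau> (dist (Y \<omega>) q) - \<tau> (dist (Y \<omega>) m) \<partial>M)
              \<ge> \<tau> (dist q m) * measure M {\<omega> \<in> space M. Y \<omega> = m}"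
proof
  fix q
  interpret S0plus_flat \<tau> using assms(4,5) by unfold_locales
  have "(1/2)^k * \<tau> (dist q m) * measure M {\<omega> \<in> space M. Y \<omega> = m}
    \<le> (1/2)^k * (\<integral>\<omega>. \<tau> (dist (Y \<omega>) q) - \<tau> (dist (Y \<omega>) m) \<partial>M)
      + \<tau> ((1/2)^k * dist q m) * measure M {\<omega> \<in> space M. Y \<omega> = m}" for k
  proof -
    obtain \<gamma> where "\<And>y. dist y \<gamma> \<le> (1 - (1/2)^k) * dist y m + (1/2)^k * dist y q"
      using hadamard_space_dyadic_point[OF assms(1)] by blast
    then show ?thesis
      by (rule minimizer_interpolation_bound[OF assms(2,3,6) assms(7)[rule_format]]) (simp_all add: power_le_one)
  qed
  then show "\<tau> (dist q m) * measure M {\<omega> \<in> space M. Y \<omega> = m}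
    \<le> (\<integral>\<omega>. \<tau> (dist (Y \<omega>) q) - \<tau> (dist (Y \<omega>) m) \<partial>M)"
    using prob_space.prob_le_1[OF assms(2)] by (intro le_of_dyadic_bound) auto
qed

end
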